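(* For every 3-periodic $P_1P_2P_3$ of $\mathcal{E}$, let $A_1^\dagger$ and $A_2^\dagger$ be the areas of its $f_1$-inversive and $f_2$-inversive triangles. Then \[A_1^\dagger A_2^\dagger=\frac{\rho^8}{8a^8b^2}\left[(a^4+2a^2b^2+4b^4)\delta+a^6+\tfrac32 a^4b^2+4b^6\right],\] which is independent of the 3-periodic.
   Context: Let $a>b>0$ and let $\mathcal{E}$ be the ellipse $x^2/a^2+y^2/b^2=1$. Set $c=\sqrt{a^2-b^2}$, $\delta=\sqrt{a^4-a^2b^2+b^4}$, and let the foci be $f_1=(-c,0)$, $f_2=(c,0)$. A 3-periodic is a triangle $P_1P_2P_3$ with vertices on $\mathcal{E}$ such that at each vertex the normal to $\mathcal{E}$ bisects the angle formed by the two sides meeting at that vertex; these form a one-parameter family (one through every point of $\mathcal{E}$). Fix $\rho>0$. For $j=1,2$, the $f_j$-inversive triangle of $P_1P_2P_3$ has vertices $P_{j,i}^\dagger=f_j+(\rho/d_{j,i})^2(P_i-f_j)$, where $d_{j,i}=|P_i-f_j|$ (inversion in the circle of radius $\rho$ centered at $f_j$). *)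

theory Defs
  imports "HOL-Analysis.Analysis"
begin

definition on_ellipse :: "real \<Rightarrow> real \<Rightarrow> real \<times> real \<Rightarrow> bool" where
  "on_ellipse a b P \<longleftrightarrow> (fst P)^2 / a^2 + (snd P)^2 / b^2 = 1"

definition cross2 :: "real \<times> real \<Rightarrow> real \<times> real \<Rightarrow> real" where
  "cross2 u v = fst u * snd v - snd u * fst v"

definition ellipse_normal :: "real \<Rightarrow> real \<Rightarrow> real \<times> real \<Rightarrow> real \<times> real" where
  "ellipse_normal a b P = (fst P / a^2, snd P / b^2)"

text \<open>The normal at P bisects the angle QPR: the internal bisector direction
  (sum of the unit vectors along the two sides) is parallel to the normal.\<close>
definition normal_bisects :: "real \<Rightarrow> real \<Rightarrow> real \<times> real \<Rightarrow> real \<times> real \<Rightarrow> real \<times> real \<Rightarrow> bool" where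
  "normal_bisects a b P Q R \<longleftrightarrow>
     cross2 ((1 / norm (Q - P)) *\<^sub>R (Q - P) + (1 / norm (R - P)) *\<^sub>R (R - P))
            (ellipse_normal a b P) = 0"

definition three_periodic :: "real \<Rightarrow> real \<Rightarrow> real \<times> real \<Rightarrow> real \<times> real \<Rightarrow> real \<times> real \<Rightarrow> bool" where
  "three_periodic a b P1 P2 P3 \<longleftrightarrow>
     P1 \<noteq> P2 \<and> P2 \<noteq> P3 \<and> P1 \<noteq> P3 \<and>
     on_ellipse a b P1 \<and> on_ellipse a b P2 \<and> on_ellipse a b P3 \<and>
     normal_bisects a b P1 P2 P3 \<and> normal_bisects a b P2 P3 P1 \<and> normal_bisects a b P3 P1 P2"

definition invert :: "real \<Rightarrow> real \<times> real \<Rightarrow> real \<times> real \<Rightarrow> real \<times> real" where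
  "invert \<rho> f P = f + (\<rho> / dist P f)^2 *\<^sub>R (P - f)"

definition tri_area :: "real \<times> real \<Rightarrow> real \<times> real \<Rightarrow> real \<times> real \<Rightarrow> real" where
  "tri_area Q1 Q2 Q3 = \<bar>cross2 (Q2 - Q1) (Q3 - Q1)\<bar> / 2"

end

theory Submission
  imports Defs
begin

(* Write a point of the ellipse as P = (a cos t, b sin t) and encode it by the unit complex number
   z = e^(i t).  With m^2 = a + b and n^2 = a - b the foci are (-mn, 0) and (mn, 0); the focal radius
   a - mn cos t is linear in z and 1/z, so inversion in the focus (mn, 0) becomes the rational map
   z |-> 2 rho^2 z / (n z - m)^2 (and the conjugate 2 rho^2 z / (m z - n)^2).  Consequently twice the
   signed area of an inversive triangle is the Vandermonde product of z1, z2, z3 times a polynomial in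
   their elementary symmetric functions e1, e2, e3, divided by a product of squares.

   The billiard condition at every vertex says that the Joachimsthal quantity
   (1 - <N(P), Q>) / |PQ| is the same for all three sides.  This forces every pair of vertices to
   satisfy one symmetric biquadratic relation, and Vieta's formulas on the unit circle then give
   e2 = -s and e1 = -s e3, where (a^2 - b^2) s = 2 delta - a^2 - b^2.  After this substitution the
   product of the areas for the two foci no longer depends on the remaining parameter e3. *)

section \<open>Eccentric-anomaly coordinates and inversion in a focus\<close>

definition complex_of_point :: "real \<times> real \<Rightarrow> complex" where
  "complex_of_point P = Complex (fst P) (snd P)"

definition ell_coord :: "real \<Rightarrow> real \<Rightarrow> real \<times> real \<Rightarrow> complex" where
  "ell_coord a b P = Complex (fst P / a) (snd P / b)"

lemma ell_coord_inverse:
  assumes "a \<noteq> 0" "b \<noteq> 0"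
  shows "P = (a * Re (ell_coord a b P), b * Im (ell_coord a b P))"
  using assms by (simp add: ell_coord_def)

lemma ell_coord_unit:
  assumes "on_ellipse a b P"
  shows "(Re (ell_coord a b P))^2 + (Im (ell_coord a b P))^2 = 1"
  using assms by (simp add: ell_coord_def on_ellipse_def power_divide)

lemma cmod_ell_coord:
  assumes "on_ellipse a b P"
  shows "cmod (ell_coord a b P) = 1"
  using ell_coord_unit[OF assms] by (simp add: cmod_def)

lemma ell_coord_inj:
  assumes "a \<noteq> 0" "b \<noteq> 0" "P \<noteq> Q"
  shows "ell_coord a b P \<noteq> ell_coord a b Q"
  using assms ell_coord_inverse[of a b P] ell_coord_inverse[of a b Q] by metis

lemma unit_affine_nonzero:
  fixes p q :: real and z :: complex
  assumes "cmod z = 1" "p^2 \<noteq> q^2"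
  shows "of_real p * z - of_real q \<noteq> 0"
proof
  assume "of_real p * z - of_real q = 0"
  then have "cmod (of_real p * z) = cmod (of_real q)" by simp
  then have "\<bar>p\<bar> = \<bar>q\<bar>" using assms(1) by (simp add: norm_mult)
  then show False using assms(2) by (metis power2_abs)
qed

lemma focal_radius_ell_coord:
  fixes a b m n :: real
  assumes ab: "a > b" "b > 0" and m2: "m^2 = a + b" and n2: "n^2 = a - b"
    and P: "on_ellipse a b P"
  shows "dist P (m * n, 0) = a - m * n * Re (ell_coord a b P)"
    and "a - m * n * Re (ell_coord a b P) > 0"
proof -
  define X where "X = Re (ell_coord a b P)"
  define Y where "Y = Im (ell_coord a b P)"
  have XY: "X^2 + Y^2 = 1" using ell_coord_unit[OF P] by (simp add: X_def Y_def)
  have mn2: "(m * n)^2 = a^2 - b^2"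
    unfolding power_mult_distrib m2 n2 by (simp add: power2_eq_square algebra_simps)
  have "X^2 \<le> 1" using XY by (smt (verit) zero_le_power2)
  then have "(m * n * X)^2 \<le> (m * n)^2"
    by (simp add: power_mult_distrib mult_left_le)
  moreover have "b^2 > 0" using ab by simp
  ultimately have "(m * n * X)^2 < a^2" using mn2 by linarith
  then show pos: "a - m * n * X > 0" using ab by (simp add: power2_less_imp_less)
  have "(a * X - m * n)^2 + (b * Y)^2 = (a - m * n * X)^2" using XY mn2 by algebra
  moreover have "P = (a * X, b * Y)"
    using ell_coord_inverse[of a b P] ab by (simp add: X_def Y_def)
  ultimately show "dist P (m * n, 0) = a - m * n * X"
    using pos by (simp add: dist_Pair_Pair dist_real_def real_sqrt_unique)
qed

lemma invert_focus_ell_coord: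
  fixes a b m n \<rho> :: real
  assumes ab: "a > b" "b > 0" and m2: "m^2 = a + b" and n2: "n^2 = a - b"
    and P: "on_ellipse a b P"
  defines "z \<equiv> ell_coord a b P"
    and "w \<equiv> complex_of_point (invert \<rho> (m * n, 0) P - (m * n, 0))"
  shows "w = 2 * of_real (\<rho>^2) * z / (of_real n * z - of_real m)^2"
    and "cnj w = 2 * of_real (\<rho>^2) * z / (of_real m * z - of_real n)^2"
proof -
  define X where "X = Re z"
  define Y where "Y = Im z"
  have XY: "X^2 + Y^2 = 1" using ell_coord_unit[OF P] by (simp add: X_def Y_def z_def)
  have Pxy: "P = (a * X, b * Y)"
    using ell_coord_inverse[of a b P] ab by (simp add: X_def Y_def z_def)
  define d where "d = a - m * n * X"
  have "dist P (m * n, 0) = d" and d_pos: "d > 0"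
    using focal_radius_ell_coord[OF ab m2 n2 P] by (simp_all add: d_def X_def z_def)
  then have w: "w = of_real ((\<rho> / d)^2) * Complex (a * X - m * n) (b * Y)"
    by (simp add: w_def invert_def Pxy complex_of_point_def complex_eq_iff)
  have z: "z = Complex X Y" by (simp add: X_def Y_def)
  have cz: "cmod z = 1" using cmod_ell_coord[OF P] by (simp add: z_def)
  have "m^2 \<noteq> n^2" using m2 n2 ab by simp
  then have ne: "of_real n * z - of_real m \<noteq> 0" "of_real m * z - of_real n \<noteq> 0"
    using unit_affine_nonzero[OF cz] by metis+
  have scale: "of_real ((\<rho> / d)^2) * C = 2 * of_real (\<rho>^2) * z / L^2"
    if "C * L^2 = 2 * z * of_real (d^2)" "L \<noteq> 0" for C L
    using that d_pos by (simp add: field_simps power_divide)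
  have "Complex (a * X - m * n) (b * Y) * (of_real n * z - of_real m)^2 = 2 * z * of_real (d^2)"
    unfolding z d_def complex_eq_iff using XY m2 n2 by (simp add: power2_eq_square; algebra)
  from scale[OF this ne(1)] show "w = 2 * of_real (\<rho>^2) * z / (of_real n * z - of_real m)^2"
    unfolding w .
  have "Complex (a * X - m * n) (- (b * Y)) * (of_real m * z - of_real n)^2 = 2 * z * of_real (d^2)"
    unfolding z d_def complex_eq_iff using XY m2 n2 by (simp add: power2_eq_square; algebra)
  from scale[OF this ne(2)] show "cnj w = 2 * of_real (\<rho>^2) * z / (of_real m * z - of_real n)^2"
    unfolding w by (simp add: complex_eq_iff)
qed

section \<open>The inversive area as a symmetric function\<close>

definition double_signed_area :: "real \<times> real \<Rightarrow> real \<times> real \<Rightarrow> real \<times> real \<Rightarrow> real" where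
  "double_signed_area Q1 Q2 Q3 = cross2 (Q2 - Q1) (Q3 - Q1)"

lemma tri_area_eq: "tri_area Q1 Q2 Q3 = \<bar>double_signed_area Q1 Q2 Q3\<bar> / 2"
  by (simp add: tri_area_def double_signed_area_def)

lemma double_signed_area_complex:
  "of_real (double_signed_area Q1 Q2 Q3) * (2 * \<i>) =
     (cnj (complex_of_point (Q2 - f)) - cnj (complex_of_point (Q1 - f)))
       * (complex_of_point (Q3 - f) - complex_of_point (Q1 - f))
   - (complex_of_point (Q2 - f) - complex_of_point (Q1 - f))
       * (cnj (complex_of_point (Q3 - f)) - cnj (complex_of_point (Q1 - f)))"
  by (simp add: double_signed_area_def cross2_def complex_of_point_def complex_eq_iff algebra_simps)

definition det3 :: "'a::idom \<Rightarrow> 'a \<Rightarrow> 'a \<Rightarrow> 'a \<Rightarrow> 'a \<Rightarrow> 'a \<Rightarrow> 'a \<Rightarrow> 'a \<Rightarrow> 'a \<Rightarrow> 'a" where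
  "det3 a1 b1 c1 a2 b2 c2 a3 b3 c3 = a1 * (b2 * c3 - c2 * b3) - b1 * (a2 * c3 - c2 * a3) + c1 * (a2 * b3 - b2 * a3)"

lemma det3_scale_rows:
  "det3 l1 (l1 * u1) (l1 * t1) l2 (l2 * u2) (l2 * t2) l3 (l3 * u3) (l3 * t3) = l1 * l2 * l3 * det3 1 u1 t1 1 u2 t2 1 u3 t3"
  unfolding det3_def by algebra

definition focal_denom :: "'a::idom \<Rightarrow> 'a \<Rightarrow> 'a \<Rightarrow> 'a" where
  "focal_denom m n z = (n * z - m)^2 * (m * z - n)^2"

definition inversive_area_poly :: "'a::idom \<Rightarrow> 'a \<Rightarrow> 'a \<Rightarrow> 'a \<Rightarrow> 'a \<Rightarrow> 'a" where
  "inversive_area_poly m n e1 e2 e3 = 2 * m^3 * n^3 * (m^2 - n^2) * (1 + e2 + e1 * e3 + e3^2)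
      + e3 * (m^8 - 4 * m^6 * n^2 + 4 * m^2 * n^6 - n^8) - m^2 * n^2 * (m^4 - n^4) * (e1 + e2 * e3)"

lemma det3_inversive_factor:
  "det3 (focal_denom m n z1) (z1 * (m * z1 - n)^2) (z1 * (n * z1 - m)^2)
        (focal_denom m n z2) (z2 * (m * z2 - n)^2) (z2 * (n * z2 - m)^2)
        (focal_denom m n z3) (z3 * (m * z3 - n)^2) (z3 * (n * z3 - m)^2)
   = (z2 - z1) * (z3 - z1) * (z3 - z2) * inversive_area_poly m n (z1 + z2 + z3) (z1 * z2 + z1 * z3 + z2 * z3) (z1 * z2 * z3)"
  unfolding det3_def focal_denom_def inversive_area_poly_def by algebra

lemma inversive_cross_identity:
  fixes z1 z2 z3 m n P :: "'a::field"
  assumes "focal_denom m n z1 \<noteq> 0" "focal_denom m n z2 \<noteq> 0" "focal_denom m n z3 \<noteq> 0"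
  shows "((2 * P * z2 / (m * z2 - n)^2 - 2 * P * z1 / (m * z1 - n)^2) * (2 * P * z3 / (n * z3 - m)^2 - 2 * P * z1 / (n * z1 - m)^2)
        - (2 * P * z2 / (n * z2 - m)^2 - 2 * P * z1 / (n * z1 - m)^2) * (2 * P * z3 / (m * z3 - n)^2 - 2 * P * z1 / (m * z1 - n)^2))
       * (focal_denom m n z1 * focal_denom m n z2 * focal_denom m n z3)
     = -4 * P^2 * ((z2 - z1) * (z3 - z1) * (z3 - z2)
       * inversive_area_poly m n (z1 + z2 + z3) (z1 * z2 + z1 * z3 + z2 * z3) (z1 * z2 * z3))"
proof -
  have rows: "z * (m * z - n)^2 = focal_denom m n z * (z / (n * z - m)^2)"
             "z * (n * z - m)^2 = focal_denom m n z * (z / (m * z - n)^2)"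
    if "focal_denom m n z \<noteq> 0" for z
    using that by (simp_all add: focal_denom_def field_simps)
  have cross_det3:
    "((2 * P * t2 - 2 * P * t1) * (2 * P * u3 - 2 * P * u1) - (2 * P * u2 - 2 * P * u1) * (2 * P * t3 - 2 * P * t1))
       * (l1 * l2 * l3)
     = -4 * P^2 * det3 l1 (l1 * u1) (l1 * t1) l2 (l2 * u2) (l2 * t2) l3 (l3 * u3) (l3 * t3)"
    for u1 u2 u3 t1 t2 t3 l1 l2 l3 :: 'a
    unfolding det3_scale_rows det3_def by algebra
  from cross_det3[of "z2 / (m * z2 - n)^2" "z1 / (m * z1 - n)^2" "z3 / (n * z3 - m)^2" "z1 / (n * z1 - m)^2"
      "z2 / (n * z2 - m)^2" "z3 / (m * z3 - n)^2" "focal_denom m n z1" "focal_denom m n z2" "focal_denom m n z3"]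
  show ?thesis
    unfolding rows(1)[OF assms(1), symmetric] rows(1)[OF assms(2), symmetric] rows(1)[OF assms(3), symmetric]
      rows(2)[OF assms(1), symmetric] rows(2)[OF assms(2), symmetric] rows(2)[OF assms(3), symmetric]
      det3_inversive_factor
    by (simp only: times_divide_eq_right)
qed

lemma focal_denom_ell_coord_nonzero:
  fixes m n :: real
  assumes "on_ellipse a b P" "m^2 \<noteq> n^2"
  shows "focal_denom (of_real m) (of_real n) (ell_coord a b P) \<noteq> 0"
  using unit_affine_nonzero[OF cmod_ell_coord[OF assms(1)]] assms(2) by (simp add: focal_denom_def)

lemma double_signed_area_invert_focus:
  fixes a b m n \<rho> :: real
  assumes ab: "a > b" "b > 0" and m2: "m^2 = a + b" and n2: "n^2 = a - b"
    and P: "on_ellipse a b P1" "on_ellipse a b P2" "on_ellipse a b P3"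
  defines "z1 \<equiv> ell_coord a b P1" and "z2 \<equiv> ell_coord a b P2" and "z3 \<equiv> ell_coord a b P3"
  shows "of_real (double_signed_area (invert \<rho> (m * n, 0) P1) (invert \<rho> (m * n, 0) P2) (invert \<rho> (m * n, 0) P3))
       * (2 * \<i>) * (focal_denom (of_real m) (of_real n) z1 * focal_denom (of_real m) (of_real n) z2
         * focal_denom (of_real m) (of_real n) z3)
     = -4 * (of_real (\<rho>^2))^2 * ((z2 - z1) * (z3 - z1) * (z3 - z2)
       * inversive_area_poly (of_real m) (of_real n) (z1 + z2 + z3) (z1 * z2 + z1 * z3 + z2 * z3) (z1 * z2 * z3))"
proof -
  have "m^2 \<noteq> n^2" using m2 n2 ab by simp
  note denom = focal_denom_ell_coord_nonzero[OF _ this]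
  note inv1 = invert_focus_ell_coord[OF ab m2 n2 P(1), of \<rho>, folded z1_def]
  note inv2 = invert_focus_ell_coord[OF ab m2 n2 P(2), of \<rho>, folded z2_def]
  note inv3 = invert_focus_ell_coord[OF ab m2 n2 P(3), of \<rho>, folded z3_def]
  show ?thesis
    unfolding double_signed_area_complex[where f = "(m * n, 0)"] inv1(2) inv2(2) inv3(2)
    unfolding inv1(1) inv2(1) inv3(1) z1_def[symmetric] z2_def[symmetric] z3_def[symmetric]
    using inversive_cross_identity[OF denom[OF P(1)] denom[OF P(2)] denom[OF P(3)], where P = "of_real (\<rho>^2)",
        folded z1_def z2_def z3_def]
    by simp
qed

section \<open>The billiard condition\<close>

lemma inner_ellipse_normal:
  "inner (ellipse_normal a b P) Q = fst P * fst Q / a^2 + snd P * snd Q / b^2"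
  by (simp add: ellipse_normal_def inner_prod_def)

lemma inner_ellipse_normal_commute:
  "inner (ellipse_normal a b P) Q = inner (ellipse_normal a b Q) P"
  by (simp add: inner_ellipse_normal mult.commute)

lemma inner_ellipse_normal_self:
  "on_ellipse a b P \<Longrightarrow> inner (ellipse_normal a b P) P = 1"
  by (simp add: inner_ellipse_normal on_ellipse_def power2_eq_square)

lemma inner_ellipse_normal_ell_coord:
  assumes "a \<noteq> 0" "b \<noteq> 0"
  shows "inner (ellipse_normal a b P) Q = Re (cnj (ell_coord a b P) * ell_coord a b Q)"
  using assms by (simp add: inner_ellipse_normal ell_coord_def power2_eq_square)

lemma on_ellipse_strictly_convex:
  assumes "a > 0" "b > 0" "on_ellipse a b Q" "on_ellipse a b R" "Q \<noteq> R" "0 < t" "t < 1"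
  shows "\<not> on_ellipse a b ((1 - t) *\<^sub>R Q + t *\<^sub>R R)"
proof
  define X where "X = Re (ell_coord a b Q) - Re (ell_coord a b R)"
  define Y where "Y = Im (ell_coord a b Q) - Im (ell_coord a b R)"
  have "X \<noteq> 0 \<or> Y \<noteq> 0"
    using ell_coord_inj[of a b Q R] assms(1,2,5) by (auto simp: X_def Y_def complex_eq_iff)
  then have "X^2 + Y^2 > 0" by (simp add: sum_power2_gt_zero_iff)
  moreover assume "on_ellipse a b ((1 - t) *\<^sub>R Q + t *\<^sub>R R)"
  then have "t * (1 - t) * (X^2 + Y^2) = 0"
    using ell_coord_unit[OF assms(3)] ell_coord_unit[OF assms(4)] assms(1,2)
    by (simp add: X_def Y_def ell_coord_def on_ellipse_def power_divide field_simps) algebra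
  ultimately show False using assms(6,7) by simp
qed

lemma unit_bisector_inner_eq:
  fixes u v N :: "real \<times> real"
  assumes "norm u = 1" "norm v = 1" "cross2 (u + v) N = 0" "u + v \<noteq> 0"
  shows "inner N u = inner N v"
proof -
  obtain u1 u2 v1 v2 N1 N2 where uvN: "u = (u1, u2)" "v = (v1, v2)" "N = (N1, N2)"
    by (cases u, cases v, cases N)
  have "u1^2 + u2^2 = 1" "v1^2 + v2^2 = 1" using assms(1,2) by (simp_all add: uvN norm_Pair)
  then have sd: "(u1 + v1) * (u1 - v1) + (u2 + v2) * (u2 - v2) = 0" by algebra
  have cr: "(u1 + v1) * N2 - (u2 + v2) * N1 = 0" using assms(3) by (simp add: uvN cross2_def)
  \<comment> \<open>in the plane, the sum and the difference of two unit vectors are orthogonal, and N is parallel to the sum\<close>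
  have "(N1 * (u1 - v1) + N2 * (u2 - v2)) * (u1 + v1) = 0"
       "(N1 * (u1 - v1) + N2 * (u2 - v2)) * (u2 + v2) = 0"
    using sd cr by algebra+
  moreover have "u1 + v1 \<noteq> 0 \<or> u2 + v2 \<noteq> 0" using assms(4) by (simp add: uvN zero_prod_def)
  ultimately have "N1 * (u1 - v1) + N2 * (u2 - v2) = 0" by auto
  then show ?thesis by (simp add: uvN inner_prod_def algebra_simps)
qed

lemma ellipse_unit_chords_sum_nonzero:
  assumes ab: "a > 0" "b > 0" and on: "on_ellipse a b P" "on_ellipse a b Q" "on_ellipse a b R"
    and ne: "P \<noteq> Q" "P \<noteq> R" "Q \<noteq> R"
  shows "(1 / norm (Q - P)) *\<^sub>R (Q - P) + (1 / norm (R - P)) *\<^sub>R (R - P) \<noteq> 0"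
proof
  define Lq where "Lq = norm (Q - P)"
  define Lr where "Lr = norm (R - P)"
  have L: "Lq > 0" "Lr > 0" using ne by (simp_all add: Lq_def Lr_def)
  assume "(1 / norm (Q - P)) *\<^sub>R (Q - P) + (1 / norm (R - P)) *\<^sub>R (R - P) = 0"
  then have "(Lq * Lr) *\<^sub>R ((1 / Lq) *\<^sub>R (Q - P) + (1 / Lr) *\<^sub>R (R - P)) = 0"
    by (simp add: Lq_def Lr_def)
  then have "Lr *\<^sub>R (Q - P) + Lq *\<^sub>R (R - P) = 0"
    using L by (simp add: scaleR_add_right)
  then have sum: "(Lq + Lr) *\<^sub>R P = Lr *\<^sub>R Q + Lq *\<^sub>R R"
    by (simp add: prod_eq_iff algebra_simps)
  have "P = (1 / (Lq + Lr)) *\<^sub>R ((Lq + Lr) *\<^sub>R P)" using L by simp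
  also have "\<dots> = (Lr / (Lq + Lr)) *\<^sub>R Q + (Lq / (Lq + Lr)) *\<^sub>R R"
    unfolding sum by (simp add: scaleR_add_right)
  also have "Lr / (Lq + Lr) = 1 - Lq / (Lq + Lr)" using L by (simp add: field_simps)
  finally have "P = (1 - Lq / (Lq + Lr)) *\<^sub>R Q + (Lq / (Lq + Lr)) *\<^sub>R R" .
  then show False
    using on_ellipse_strictly_convex[OF ab on(2,3) ne(3), of "Lq / (Lq + Lr)"] on(1) L by simp
qed

lemma joachimsthal_invariant:
  assumes ab: "a > 0" "b > 0" and on: "on_ellipse a b P" "on_ellipse a b Q" "on_ellipse a b R"
    and ne: "P \<noteq> Q" "P \<noteq> R" "Q \<noteq> R" and bis: "normal_bisects a b P Q R"
  shows "(1 - inner (ellipse_normal a b P) Q) / dist P Q = (1 - inner (ellipse_normal a b P) R) / dist P R"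
proof -
  define N where "N = ellipse_normal a b P"
  define Lq where "Lq = norm (Q - P)"
  define Lr where "Lr = norm (R - P)"
  define u where "u = (1 / Lq) *\<^sub>R (Q - P)"
  define v where "v = (1 / Lr) *\<^sub>R (R - P)"
  have L: "Lq > 0" "Lr > 0" using ne by (simp_all add: Lq_def Lr_def)
  have "u + v \<noteq> 0"
    using ellipse_unit_chords_sum_nonzero[OF ab on ne] by (simp add: u_def v_def Lq_def Lr_def)
  moreover have "norm u = 1" "norm v = 1" using L by (simp_all add: u_def v_def Lq_def Lr_def)
  moreover have "cross2 (u + v) N = 0" using bis by (simp add: normal_bisects_def u_def v_def Lq_def Lr_def N_def)
  ultimately have "inner N u = inner N v" by (metis unit_bisector_inner_eq)
  moreover have "inner N ((1 / norm (X - P)) *\<^sub>R (X - P)) = - ((1 - inner N X) / dist P X)" for X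
    using inner_ellipse_normal_self[OF on(1)]
    by (simp add: N_def inner_diff_right dist_norm norm_minus_commute minus_divide_left)
  ultimately show ?thesis by (simp add: u_def v_def Lq_def Lr_def N_def)
qed

lemma three_periodic_joachimsthal:
  assumes "a > 0" "b > 0" "three_periodic a b P1 P2 P3"
  obtains K where "1 - inner (ellipse_normal a b P1) P2 = K * dist P1 P2"
    "1 - inner (ellipse_normal a b P1) P3 = K * dist P1 P3"
    "1 - inner (ellipse_normal a b P2) P3 = K * dist P2 P3"
proof
  note tp = assms(3)[unfolded three_periodic_def]
  define K where "K = (1 - inner (ellipse_normal a b P1) P2) / dist P1 P2"
  have J1: "(1 - inner (ellipse_normal a b P1) P3) / dist P1 P3 = K"
    using joachimsthal_invariant[OF assms(1,2), of P1 P2 P3] tp by (simp add: K_def)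
  have J2: "(1 - inner (ellipse_normal a b P2) P3) / dist P2 P3 = K"
    using joachimsthal_invariant[OF assms(1,2), of P2 P3 P1] tp
    by (auto simp: K_def inner_ellipse_normal_commute[of a b P2 P1] dist_commute)
  show "1 - inner (ellipse_normal a b P1) P2 = K * dist P1 P2"
    "1 - inner (ellipse_normal a b P1) P3 = K * dist P1 P3"
    "1 - inner (ellipse_normal a b P2) P3 = K * dist P2 P3"
    using J1 J2 tp by (simp_all add: K_def field_simps)
qed

lemma inner_ellipse_normal_lt_one:
  assumes "a > 0" "b > 0" "on_ellipse a b P" "on_ellipse a b Q" "P \<noteq> Q"
  shows "inner (ellipse_normal a b P) Q < 1"
proof -
  define z where "z = ell_coord a b P"
  define w where "w = ell_coord a b Q"
  have "Re z \<noteq> Re w \<or> Im z \<noteq> Im w"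
    using ell_coord_inj[of a b P Q] assms(1,2,5) by (auto simp: z_def w_def complex_eq_iff)
  then have "(Re z - Re w)^2 + (Im z - Im w)^2 > 0" by (simp add: sum_power2_gt_zero_iff)
  moreover have "2 * (1 - Re (cnj z * w)) = (Re z - Re w)^2 + (Im z - Im w)^2"
    using ell_coord_unit[OF assms(3)] ell_coord_unit[OF assms(4)] unfolding z_def w_def
    by simp algebra
  ultimately show ?thesis
    using inner_ellipse_normal_ell_coord[of a b P Q] assms(1,2) by (simp add: z_def w_def)
qed

definition chord_quadratic :: "'a::idom \<Rightarrow> 'a \<Rightarrow> 'a \<Rightarrow> 'a \<Rightarrow> 'a" where
  "chord_quadratic s r z w = z^2 + w^2 - s * z^2 * w^2 - s - 2 * r * z * w"

lemma chord_relation: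
  fixes K :: real
  assumes ab: "a > 0" "b > 0" and on: "on_ellipse a b P" "on_ellipse a b Q" and ne: "P \<noteq> Q"
    and K: "1 - inner (ellipse_normal a b P) Q = K * dist P Q"
  defines "z \<equiv> ell_coord a b P" and "w \<equiv> ell_coord a b Q"
  shows "chord_quadratic (of_real (K^2 * (a^2 - b^2))) (of_real (1 - K^2 * (a^2 + b^2))) z w = 0"
proof -
  define X where "X = Re z"
  define Y where "Y = Im z"
  define X' where "X' = Re w"
  define Y' where "Y' = Im w"
  have u: "X^2 + Y^2 = 1" "X'^2 + Y'^2 = 1"
    using ell_coord_unit[OF on(1)] ell_coord_unit[OF on(2)] by (simp_all add: X_def Y_def X'_def Y'_def z_def w_def)
  define g where "g = X * X' + Y * Y'"
  have g: "inner (ellipse_normal a b P) Q = g"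
    using inner_ellipse_normal_ell_coord[of a b P Q] ab by (simp add: g_def X_def Y_def X'_def Y'_def z_def w_def)
  have "fst P = a * X" "snd P = b * Y" "fst Q = a * X'" "snd Q = b * Y'"
    using ab by (simp_all add: X_def Y_def X'_def Y'_def z_def w_def ell_coord_def)
  moreover have "(dist P Q)^2 = (fst P - fst Q)^2 + (snd P - snd Q)^2"
    by (cases P, cases Q) (simp add: dist_Pair_Pair dist_real_def)
  ultimately have "(dist P Q)^2 = (a * X - a * X')^2 + (b * Y - b * Y')^2" by simp
  \<comment> \<open>the squared chord length is divisible by the Joachimsthal numerator 1 - g\<close>
  also have "\<dots> = (1 - g) * (a^2 + b^2 - (a^2 - b^2) * (X * X' - Y * Y'))"
    unfolding g_def using u by algebra
  finally have L: "(dist P Q)^2 = (1 - g) * (a^2 + b^2 - (a^2 - b^2) * (X * X' - Y * Y'))" .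
  have "1 - g > 0" using inner_ellipse_normal_lt_one[OF ab on ne] g by simp
  moreover have "(1 - g)^2 = K^2 * (dist P Q)^2" using K g by (simp add: power_mult_distrib)
  then have "(1 - g) * (1 - g) = (1 - g) * (K^2 * (a^2 + b^2 - (a^2 - b^2) * (X * X' - Y * Y')))"
    unfolding L by (simp add: power2_eq_square mult.assoc)
  ultimately have "1 - g = K^2 * (a^2 + b^2 - (a^2 - b^2) * (X * X' - Y * Y'))" by simp
  then have "X * X' + Y * Y' - K^2 * (a^2 - b^2) * (X * X' - Y * Y') - (1 - K^2 * (a^2 + b^2)) = 0"
    by (simp add: g_def algebra_simps)
  then show ?thesis
    unfolding chord_quadratic_def complex_eq_iff using u
    by (simp add: X_def Y_def X'_def Y'_def power2_eq_square; algebra)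
qed

lemma chord_quadratic_vieta:
  fixes z1 z2 z3 s r :: "'a::field"
  assumes "chord_quadratic s r z1 z2 = 0" "chord_quadratic s r z2 z3 = 0" "chord_quadratic s r z1 z3 = 0"
    and "z1 \<noteq> z2" "z2 \<noteq> z3" "z1 \<noteq> z3"
  shows "s * (z1 * z2 + z1 * z3 + z2 * z3) = - (1 + 2 * r)"
    and "z1 + z2 + z3 = - s * (z1 * z2 * z3)"
proof -
  note F = assms(1-3)[unfolded chord_quadratic_def]
  \<comment> \<open>the relations for two pairs sharing a root differ by a multiple of the difference of the other roots\<close>
  have "(z2 - z3) * ((z2 + z3) * (1 - s * z1^2) - 2 * r * z1) = 0" using F by algebra
  then have h1: "(z2 + z3) * (1 - s * z1^2) = 2 * r * z1" using assms(5) by simp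
  have "(z1 - z3) * ((z1 + z3) * (1 - s * z2^2) - 2 * r * z2) = 0" using F by algebra
  then have h2: "(z1 + z3) * (1 - s * z2^2) = 2 * r * z2" using assms(6) by simp
  have "(z1 - z2) * (s * (z1 * z2 + z1 * z3 + z2 * z3) + 1 + 2 * r) = 0" using h1 h2 by algebra
  then have "s * (z1 * z2 + z1 * z3 + z2 * z3) + 1 + 2 * r = 0" using assms(4) by simp
  then show e2: "s * (z1 * z2 + z1 * z3 + z2 * z3) = - (1 + 2 * r)" by algebra
  show "z1 + z2 + z3 = - s * (z1 * z2 * z3)" using h1 e2 by algebra
qed

lemma unit_chord_quadratic_vieta:
  fixes z1 z2 z3 :: complex and s r :: real
  assumes "chord_quadratic (of_real s) (of_real r) z1 z2 = 0" "chord_quadratic (of_real s) (of_real r) z2 z3 = 0"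
    "chord_quadratic (of_real s) (of_real r) z1 z3 = 0"
    and ne: "z1 \<noteq> z2" "z2 \<noteq> z3" "z1 \<noteq> z3" and s: "s \<noteq> 0"
    and unit: "cmod z1 = 1" "cmod z2 = 1" "cmod z3 = 1"
  shows "z1 * z2 + z1 * z3 + z2 * z3 = - of_real s"
    and "z1 + z2 + z3 = - of_real s * (z1 * z2 * z3)"
    and "s^2 = 1 + 2 * r"
proof -
  note V = chord_quadratic_vieta[OF assms(1-3) ne]
  define e2 where "e2 = z1 * z2 + z1 * z3 + z2 * z3"
  have cnj_unit: "z * cnj z = 1" if "cmod z = 1" for z
    using complex_norm_square[of z] that by simp
  \<comment> \<open>on the unit circle cnj z = 1 / z, so cnj e2 = e1 / e3; and e2 is real by the first Vieta relation\<close>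
  have real: "cnj e2 = e2"
  proof -
    have "of_real s * cnj e2 = - (1 + 2 * of_real r)"
      using arg_cong[OF V(1)[folded e2_def], of cnj] by simp
    then have "of_real s * cnj e2 = of_real s * e2" using V(1) by (simp add: e2_def)
    then show ?thesis using s by simp
  qed
  have "(z1 * z2 * z3) * cnj e2 = z1 + z2 + z3"
    using cnj_unit[OF unit(1)] cnj_unit[OF unit(2)] cnj_unit[OF unit(3)] unfolding e2_def
    by simp algebra
  then have "(z1 * z2 * z3) * e2 = - of_real s * (z1 * z2 * z3)" unfolding real V(2) .
  then have "(z1 * z2 * z3) * (e2 + of_real s) = 0" by (simp add: algebra_simps)
  moreover have "z1 * z2 * z3 \<noteq> 0" using unit by auto
  ultimately have "e2 = - of_real s" by (simp add: eq_neg_iff_add_eq_0)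
  then show e2s: "z1 * z2 + z1 * z3 + z2 * z3 = - of_real s" by (simp add: e2_def)
  show "z1 + z2 + z3 = - of_real s * (z1 * z2 * z3)" by (rule V(2))
  have "(of_real (s^2) :: complex) = of_real (1 + 2 * r)"
    using V(1) unfolding e2s by (simp add: power2_eq_square minus_equation_iff[of "of_real s * of_real s"] add.commute)
  then show "s^2 = 1 + 2 * r" by (simp only: of_real_eq_iff)
qed

lemma quartic_radicand_pos:
  fixes a b :: real
  assumes "a \<noteq> 0"
  shows "a^4 - a^2 * b^2 + b^4 > 0"
proof -
  have "a^4 - a^2 * b^2 + b^4 = (a^2 - b^2 / 2)^2 + 3 / 4 * b^4" by algebra
  moreover have "(a^2 - b^2 / 2)^2 + 3 / 4 * b^4 > 0"
    using assms by (cases "b = 0") (simp_all add: add_nonneg_pos)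
  ultimately show ?thesis by simp
qed

lemma joachimsthal_parameter:
  fixes a b K s :: real
  assumes ab: "a > b" "b > 0" and s: "s = K^2 * (a^2 - b^2)" "s^2 = 1 + 2 * (1 - K^2 * (a^2 + b^2))"
  defines "\<delta> \<equiv> sqrt (a^4 - a^2 * b^2 + b^4)"
  shows "(a^2 - b^2) * s = 2 * \<delta> - a^2 - b^2"
proof -
  have "a^4 - a^2 * b^2 + b^4 > 0" using quartic_radicand_pos[of a b] ab by simp
  then have \<delta>: "\<delta>^2 = a^4 - a^2 * b^2 + b^4" "\<delta> \<ge> 0" by (simp_all add: \<delta>_def)
  have "((a^2 - b^2) * s + a^2 + b^2)^2
      = (a^2 - b^2)^2 * s^2 + 2 * (a^2 + b^2) * ((a^2 - b^2) * s) + (a^2 + b^2)^2"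
    by algebra
  also have "\<dots> = 3 * (a^2 - b^2)^2 + (a^2 + b^2)^2"
    unfolding s(2) unfolding s(1) by algebra
  also have "\<dots> = (2 * \<delta>)^2" unfolding power_mult_distrib \<delta>(1) by algebra
  finally have sq: "((a^2 - b^2) * s + a^2 + b^2)^2 = (2 * \<delta>)^2" .
  have "a^2 - b^2 \<ge> 0" using ab by (simp add: power_mono)
  then have "(a^2 - b^2) * s + a^2 + b^2 \<ge> 0" by (simp add: s(1))
  then have "(a^2 - b^2) * s + a^2 + b^2 = 2 * \<delta>" using power2_eq_imp_eq[OF sq] \<delta>(2) by simp
  then show ?thesis by simp
qed

lemma three_periodic_symmetric_functions:
  fixes a b :: real
  assumes ab: "a > b" "b > 0" and tp: "three_periodic a b P1 P2 P3"
  defines "z1 \<equiv> ell_coord a b P1" and "z2 \<equiv> ell_coord a b P2" and "z3 \<equiv> ell_coord a b P3"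
    and "\<delta> \<equiv> sqrt (a^4 - a^2 * b^2 + b^4)"
  obtains s :: real where "z1 * z2 + z1 * z3 + z2 * z3 = - of_real s"
    and "z1 + z2 + z3 = - of_real s * (z1 * z2 * z3)"
    and "(a^2 - b^2) * s = 2 * \<delta> - a^2 - b^2"
proof -
  have a: "a > 0" using ab by simp
  note tp' = tp[unfolded three_periodic_def]
  obtain K where K: "1 - inner (ellipse_normal a b P1) P2 = K * dist P1 P2"
      "1 - inner (ellipse_normal a b P1) P3 = K * dist P1 P3"
      "1 - inner (ellipse_normal a b P2) P3 = K * dist P2 P3"
    using three_periodic_joachimsthal[OF a ab(2) tp] by blast
  have "K * dist P1 P2 > 0" using K(1) inner_ellipse_normal_lt_one[OF a ab(2), of P1 P2] tp' by simp
  then have "K > 0" using tp' by (simp add: zero_less_mult_iff)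
  define s where "s = K^2 * (a^2 - b^2)"
  define r where "r = 1 - K^2 * (a^2 + b^2)"
  have "s > 0" using \<open>K > 0\<close> ab by (simp add: s_def power_strict_mono)
  have C: "chord_quadratic (of_real s) (of_real r) z1 z2 = 0" "chord_quadratic (of_real s) (of_real r) z2 z3 = 0"
      "chord_quadratic (of_real s) (of_real r) z1 z3 = 0"
    using chord_relation[OF a ab(2), of P1 P2 K] chord_relation[OF a ab(2), of P2 P3 K]
      chord_relation[OF a ab(2), of P1 P3 K] K tp'
    by (simp_all add: s_def r_def z1_def z2_def z3_def)
  have "z1 \<noteq> z2" "z2 \<noteq> z3" "z1 \<noteq> z3"
    using ell_coord_inj[of a b] ab tp' by (simp_all add: z1_def z2_def z3_def)
  moreover have "cmod z1 = 1" "cmod z2 = 1" "cmod z3 = 1"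
    using cmod_ell_coord tp' by (simp_all add: z1_def z2_def z3_def)
  moreover have "s \<noteq> 0" using \<open>s > 0\<close> by simp
  ultimately have V: "z1 * z2 + z1 * z3 + z2 * z3 = - of_real s"
      "z1 + z2 + z3 = - of_real s * (z1 * z2 * z3)" "s^2 = 1 + 2 * r"
    using unit_chord_quadratic_vieta[OF C] by blast+
  moreover have "(a^2 - b^2) * s = 2 * \<delta> - a^2 - b^2"
    using joachimsthal_parameter[OF ab s_def] V(3) by (simp add: r_def \<delta>_def)
  ultimately show ?thesis using that V(1,2) by blast
qed

section \<open>The product of the two areas\<close>

definition cubic_discr :: "'a::idom \<Rightarrow> 'a \<Rightarrow> 'a \<Rightarrow> 'a" where
  "cubic_discr e1 e2 e3 = e1^2 * e2^2 - 4 * e2^3 - 4 * e1^3 * e3 + 18 * e1 * e2 * e3 - 27 * e3^2"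

lemma vandermonde_sq_cubic_discr:
  "((z2 - z1) * (z3 - z1) * (z3 - z2))^2 = cubic_discr (z1 + z2 + z3) (z1 * z2 + z1 * z3 + z2 * z3) (z1 * z2 * z3)"
  unfolding cubic_discr_def by algebra

definition focal_norm_poly :: "'a::idom \<Rightarrow> 'a \<Rightarrow> 'a \<Rightarrow> 'a \<Rightarrow> 'a \<Rightarrow> 'a" where
  "focal_norm_poly m n e1 e2 e3 = n^2 * (e1 * m^2 + e3 * n^2)^2 - m^2 * (m^2 + e2 * n^2)^2"

lemma focal_norm_poly_eq:
  "(n^2 * z1^2 - m^2) * (n^2 * z2^2 - m^2) * (n^2 * z3^2 - m^2)
     = focal_norm_poly m n (z1 + z2 + z3) (z1 * z2 + z1 * z3 + z2 * z3) (z1 * z2 * z3)"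
  unfolding focal_norm_poly_def by algebra

lemma focal_denom_prod_both_foci:
  "(focal_denom m n z1 * focal_denom m n z2 * focal_denom m n z3)
     * (focal_denom m (- n) z1 * focal_denom m (- n) z2 * focal_denom m (- n) z3)
   = (focal_norm_poly m n (z1 + z2 + z3) (z1 * z2 + z1 * z3 + z2 * z3) (z1 * z2 * z3)
      * focal_norm_poly n m (z1 + z2 + z3) (z1 * z2 + z1 * z3 + z2 * z3) (z1 * z2 * z3))^2"
proof -
  have pair: "focal_denom m n z * focal_denom m (- n) z = ((n^2 * z^2 - m^2) * (m^2 * z^2 - n^2))^2" for z
    unfolding focal_denom_def by algebra
  have "(focal_denom m n z1 * focal_denom m n z2 * focal_denom m n z3)
       * (focal_denom m (- n) z1 * focal_denom m (- n) z2 * focal_denom m (- n) z3)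
     = (focal_denom m n z1 * focal_denom m (- n) z1) * (focal_denom m n z2 * focal_denom m (- n) z2)
       * (focal_denom m n z3 * focal_denom m (- n) z3)"
    by (simp only: mult_ac)
  also have "\<dots> = (((n^2 * z1^2 - m^2) * (n^2 * z2^2 - m^2) * (n^2 * z3^2 - m^2))
                   * ((m^2 * z1^2 - n^2) * (m^2 * z2^2 - n^2) * (m^2 * z3^2 - n^2)))^2"
    unfolding pair by (simp only: mult_ac power_mult_distrib)
  finally show ?thesis unfolding focal_norm_poly_eq .
qed

definition invariant_numerator :: "'a::idom \<Rightarrow> 'a \<Rightarrow> 'a \<Rightarrow> 'a" where
  "invariant_numerator a b \<delta> = 2 * (a^4 + 2 * a^2 * b^2 + 4 * b^4) * \<delta> + 2 * a^6 + 3 * a^4 * b^2 + 8 * b^6"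

lemma of_real_invariant_numerator:
  "of_real (invariant_numerator a b \<delta>) = invariant_numerator (of_real a) (of_real b) (of_real \<delta>)"
  by (simp add: invariant_numerator_def)

lemma invariant_numerator_pos:
  "a > 0 \<Longrightarrow> b > 0 \<Longrightarrow> \<delta> > 0 \<Longrightarrow> invariant_numerator a b (\<delta>::real) > 0"
  by (simp add: invariant_numerator_def add_pos_pos)

text \<open>This is \<open>inversive_area_poly_product\<close> multiplied through by c^16, where c = m n,
  after substituting c^2 = k and c^2 s = q.\<close>

lemma inversive_area_product_reduced:
  fixes a b \<delta> E :: "'a::idom"
  assumes "\<delta>^2 = a^4 - a^2 * b^2 + b^4"
  defines "q \<equiv> 2 * \<delta> - a^2 - b^2" and "k \<equiv> a^2 - b^2"
  shows "-16 * a^8 * b^2 * (4 * q^3 * k * (1 + E^4) + (q^4 + 18 * q^2 * k^2 - 27 * k^4) * E^2)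
     * (64 * a^2 * b^2 * E^2 * (a^2 + b^2 - 2 * k + q)^2 - 16 * b^2 * k * (k - q)^2 * (1 + E^2)^2) * k^4
    = invariant_numerator a b \<delta> *
     (((a - b) * E^2 * ((a - b) * k - (a + b) * q)^2 - (a + b) * ((a + b) * k - (a - b) * q)^2) *
      ((a + b) * E^2 * ((a + b) * k - (a - b) * q)^2 - (a - b) * ((a - b) * k - (a + b) * q)^2))^2"
  unfolding q_def k_def invariant_numerator_def using assms by algebra

lemma inversive_area_poly_product:
  fixes m n a b \<delta> s E :: "'a::idom"
  assumes m2: "m^2 = a + b" and n2: "n^2 = a - b" and ab: "a^2 \<noteq> b^2"
    and s: "(a^2 - b^2) * s = 2 * \<delta> - a^2 - b^2" and \<delta>2: "\<delta>^2 = a^4 - a^2 * b^2 + b^4"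
  shows "-16 * a^8 * b^2 * cubic_discr (- s * E) (- s) E
       * inversive_area_poly m n (- s * E) (- s) E * inversive_area_poly m (- n) (- s * E) (- s) E
     = invariant_numerator a b \<delta> * (focal_norm_poly m n (- s * E) (- s) E * focal_norm_poly n m (- s * E) (- s) E)^2"
proof -
  define c where "c = m * n"
  define q where "q = c^2 * s"
  have c2: "c^2 = a^2 - b^2" unfolding c_def power_mult_distrib m2 n2 by algebra
  have mn: "m^3 * n^3 = c^3" "m^2 * n^2 = c^2" by (simp_all add: c_def power_mult_distrib)
  have PP: "inversive_area_poly m n (- s * E) (- s) E * inversive_area_poly m (- n) (- s * E) (- s) E
      = 64 * a^2 * b^2 * E^2 * (a^2 + b^2 - 2 * c^2 + q)^2 - 16 * b^2 * c^2 * (c^2 - q)^2 * (1 + E^2)^2"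
    unfolding inversive_area_poly_def q_def using mn m2 n2 c2 by algebra
  have D: "c^8 * cubic_discr (- s * E) (- s) E
      = 4 * q^3 * c^2 * (1 + E^4) + (q^4 + 18 * q^2 * c^4 - 27 * c^8) * E^2"
    unfolding cubic_discr_def q_def by algebra
  have H: "c^4 * focal_norm_poly m n (- s * E) (- s) E
      = (a - b) * E^2 * ((a - b) * c^2 - (a + b) * q)^2 - (a + b) * ((a + b) * c^2 - (a - b) * q)^2"
    "c^4 * focal_norm_poly n m (- s * E) (- s) E
      = (a + b) * E^2 * ((a + b) * c^2 - (a - b) * q)^2 - (a - b) * ((a - b) * c^2 - (a + b) * q)^2"
    unfolding focal_norm_poly_def q_def using m2 n2 by algebra+
  have q: "q = 2 * \<delta> - a^2 - b^2" using s c2 by (simp add: q_def mult.commute)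
  have "c^16 * (-16 * a^8 * b^2 * cubic_discr (- s * E) (- s) E
       * inversive_area_poly m n (- s * E) (- s) E * inversive_area_poly m (- n) (- s * E) (- s) E)
     = -16 * a^8 * b^2 * (c^8 * cubic_discr (- s * E) (- s) E)
       * (inversive_area_poly m n (- s * E) (- s) E * inversive_area_poly m (- n) (- s * E) (- s) E) * (c^2)^4"
    by (simp add: algebra_simps power_mult[symmetric])
  also have "\<dots> = invariant_numerator a b \<delta>
      * ((c^4 * focal_norm_poly m n (- s * E) (- s) E) * (c^4 * focal_norm_poly n m (- s * E) (- s) E))^2"
    unfolding D PP H using inversive_area_product_reduced[OF \<delta>2, of E, folded q c2] by simp
  also have "\<dots> = c^16 * (invariant_numerator a b \<delta>
      * (focal_norm_poly m n (- s * E) (- s) E * focal_norm_poly n m (- s * E) (- s) E)^2)"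
    by (simp add: algebra_simps power_mult_distrib power_mult[symmetric])
  finally have "c^16 * (-16 * a^8 * b^2 * cubic_discr (- s * E) (- s) E
       * inversive_area_poly m n (- s * E) (- s) E * inversive_area_poly m (- n) (- s * E) (- s) E)
     = c^16 * (invariant_numerator a b \<delta>
       * (focal_norm_poly m n (- s * E) (- s) E * focal_norm_poly n m (- s * E) (- s) E)^2)" .
  moreover have "c^16 \<noteq> 0" using c2 ab by auto
  ultimately show ?thesis by (metis mult_left_cancel)
qed

lemma double_signed_area_focal_product:
  fixes a b m n \<rho> :: real
  assumes ab: "a > b" "b > 0" and m2: "m^2 = a + b" and n2: "n^2 = a - b"
    and on: "on_ellipse a b P1" "on_ellipse a b P2" "on_ellipse a b P3"
  defines "z1 \<equiv> ell_coord a b P1" and "z2 \<equiv> ell_coord a b P2" and "z3 \<equiv> ell_coord a b P3"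
  defines "e1 \<equiv> z1 + z2 + z3" and "e2 \<equiv> z1 * z2 + z1 * z3 + z2 * z3" and "e3 \<equiv> z1 * z2 * z3"
    and "M \<equiv> complex_of_real m" and "N \<equiv> complex_of_real n"
  defines "H \<equiv> focal_norm_poly M N e1 e2 e3 * focal_norm_poly N M e1 e2 e3"
  shows "H \<noteq> 0"
    and "of_real (double_signed_area (invert \<rho> (m * - n, 0) P1) (invert \<rho> (m * - n, 0) P2) (invert \<rho> (m * - n, 0) P3)
          * double_signed_area (invert \<rho> (m * n, 0) P1) (invert \<rho> (m * n, 0) P2) (invert \<rho> (m * n, 0) P3))
        * (-4) * H^2
      = 16 * (of_real \<rho>)^8 * (cubic_discr e1 e2 e3
          * (inversive_area_poly M N e1 e2 e3 * inversive_area_poly M (- N) e1 e2 e3))"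
proof -
  define A1 where "A1 = double_signed_area (invert \<rho> (m * - n, 0) P1) (invert \<rho> (m * - n, 0) P2) (invert \<rho> (m * - n, 0) P3)"
  define A2 where "A2 = double_signed_area (invert \<rho> (m * n, 0) P1) (invert \<rho> (m * n, 0) P2) (invert \<rho> (m * n, 0) P3)"
  define V where "V = (z2 - z1) * (z3 - z1) * (z3 - z2)"
  define Dp where "Dp = focal_denom M N z1 * focal_denom M N z2 * focal_denom M N z3"
  define Dm where "Dm = focal_denom M (- N) z1 * focal_denom M (- N) z2 * focal_denom M (- N) z3"
  have n2': "(- n)^2 = a - b" using n2 by simp
  have A2: "of_real A2 * (2 * \<i>) * Dp = -4 * (of_real (\<rho>^2))^2 * (V * inversive_area_poly M N e1 e2 e3)"
    using double_signed_area_invert_focus[OF ab m2 n2 on, of \<rho>]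
    by (simp add: A2_def Dp_def V_def M_def N_def e1_def e2_def e3_def z1_def z2_def z3_def)
  have A1: "of_real A1 * (2 * \<i>) * Dm = -4 * (of_real (\<rho>^2))^2 * (V * inversive_area_poly M (- N) e1 e2 e3)"
    using double_signed_area_invert_focus[OF ab m2 n2' on, of \<rho>]
    by (simp add: A1_def Dm_def V_def M_def N_def e1_def e2_def e3_def z1_def z2_def z3_def)
  have DD: "Dp * Dm = H^2"
    unfolding Dp_def Dm_def H_def e1_def e2_def e3_def by (rule focal_denom_prod_both_foci)
  have "m^2 \<noteq> n^2" "m^2 \<noteq> (- n)^2" using m2 n2 ab by simp_all
  then have "Dp \<noteq> 0" "Dm \<noteq> 0"
    using focal_denom_ell_coord_nonzero[OF on(1)] focal_denom_ell_coord_nonzero[OF on(2)]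
      focal_denom_ell_coord_nonzero[OF on(3)]
      focal_denom_ell_coord_nonzero[OF on(1), of m "- n"] focal_denom_ell_coord_nonzero[OF on(2), of m "- n"]
      focal_denom_ell_coord_nonzero[OF on(3), of m "- n"]
    by (simp_all add: Dp_def Dm_def M_def N_def z1_def z2_def z3_def)
  with DD show "H \<noteq> 0" by auto
  have VD: "V^2 = cubic_discr e1 e2 e3" unfolding V_def e1_def e2_def e3_def by (rule vandermonde_sq_cubic_discr)
  have "(of_real A1 * (2 * \<i>) * Dm) * (of_real A2 * (2 * \<i>) * Dp)
      = (-4 * (of_real (\<rho>^2))^2 * (V * inversive_area_poly M (- N) e1 e2 e3))
        * (-4 * (of_real (\<rho>^2))^2 * (V * inversive_area_poly M N e1 e2 e3))"
    by (simp only: A1 A2)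
  moreover have "\<i> * \<i> = (-1 :: complex)" "of_real (A1 * A2) = (of_real A1 * of_real A2 :: complex)"
    "(of_real (\<rho>^2) :: complex) = (of_real \<rho>)^2" by simp_all
  ultimately have "of_real (A1 * A2) * (-4) * (Dp * Dm)
      = 16 * (of_real \<rho>)^8 * (V^2 * (inversive_area_poly M N e1 e2 e3 * inversive_area_poly M (- N) e1 e2 e3))"
    by algebra
  then show "of_real (A1 * A2) * (-4) * H^2
      = 16 * (of_real \<rho>)^8 * (cubic_discr e1 e2 e3 * (inversive_area_poly M N e1 e2 e3 * inversive_area_poly M (- N) e1 e2 e3))"
    unfolding DD VD .
qed

lemma double_signed_area_product:
  fixes a b \<rho> :: real
  assumes ab: "a > b" "b > 0" and tp: "three_periodic a b P1 P2 P3"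
  defines "c \<equiv> sqrt (a^2 - b^2)" and "\<delta> \<equiv> sqrt (a^4 - a^2 * b^2 + b^4)"
  shows "double_signed_area (invert \<rho> (- c, 0) P1) (invert \<rho> (- c, 0) P2) (invert \<rho> (- c, 0) P3)
       * double_signed_area (invert \<rho> (c, 0) P1) (invert \<rho> (c, 0) P2) (invert \<rho> (c, 0) P3)
       * (4 * a^8 * b^2) = \<rho>^8 * invariant_numerator a b \<delta>"
  (is "?A1 * ?A2 * _ = _")
proof -
  note tp' = tp[unfolded three_periodic_def]
  define z1 where "z1 = ell_coord a b P1"
  define z2 where "z2 = ell_coord a b P2"
  define z3 where "z3 = ell_coord a b P3"
  define e1 where "e1 = z1 + z2 + z3"
  define e2 where "e2 = z1 * z2 + z1 * z3 + z2 * z3"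
  define e3 where "e3 = z1 * z2 * z3"
  obtain s where s: "e2 = - of_real s" "e1 = - of_real s * e3" "(a^2 - b^2) * s = 2 * \<delta> - a^2 - b^2"
    using three_periodic_symmetric_functions[OF ab tp] unfolding z1_def z2_def z3_def e1_def e2_def e3_def \<delta>_def
    by blast
  define m where "m = sqrt (a + b)"
  define n where "n = sqrt (a - b)"
  have m2: "m^2 = a + b" and n2: "n^2 = a - b" using ab by (simp_all add: m_def n_def)
  have "m * n = c" using ab by (simp add: m_def n_def c_def real_sqrt_mult[symmetric] power2_eq_square algebra_simps)
  then have foci: "c = m * n" "- c = m * - n" by simp_all
  define H where "H = focal_norm_poly (of_real m) (of_real n) e1 e2 e3 * focal_norm_poly (of_real n) (of_real m) e1 e2 e3"
  have on: "on_ellipse a b P1" "on_ellipse a b P2" "on_ellipse a b P3" using tp' by simp_all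
  note F = double_signed_area_focal_product[OF ab m2 n2 on,
      folded z1_def z2_def z3_def, folded e1_def e2_def e3_def, folded H_def foci]
  have "-16 * (of_real a)^8 * (of_real b)^2 * cubic_discr e1 e2 e3
      * inversive_area_poly (of_real m) (of_real n) e1 e2 e3 * inversive_area_poly (of_real m) (- of_real n) e1 e2 e3
    = of_real (invariant_numerator a b \<delta>) * H^2"
    unfolding H_def s(1,2) of_real_invariant_numerator
  proof (rule inversive_area_poly_product)
    show "(of_real m)^2 = of_real a + (of_real b :: complex)" "(of_real n)^2 = of_real a - (of_real b :: complex)"
      using m2 n2 by (simp_all flip: of_real_power)
    show "(of_real a :: complex)^2 \<noteq> (of_real b)^2"
      using ab by (simp flip: of_real_power)
    show "((of_real a)^2 - (of_real b)^2) * of_real s = 2 * of_real \<delta> - (of_real a)^2 - (of_real b :: complex)^2"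
      using arg_cong[OF s(3), of complex_of_real] by simp
    have "\<delta>^2 = a^4 - a^2 * b^2 + b^4"
      using quartic_radicand_pos[of a b] ab by (simp add: \<delta>_def less_imp_le)
    from arg_cong[OF this, of complex_of_real]
    show "(of_real \<delta>)^2 = (of_real a)^4 - (of_real a)^2 * (of_real b)^2 + (of_real b :: complex)^4" by simp
  qed
  with F(2)[of \<rho>] have "H^2 * (of_real (?A1 * ?A2) * (64 * (of_real a)^8 * (of_real b)^2)
      - 16 * (of_real \<rho>)^8 * of_real (invariant_numerator a b \<delta>)) = 0"
    by algebra
  then have "H^2 * of_real (?A1 * ?A2 * (64 * a^8 * b^2) - 16 * \<rho>^8 * invariant_numerator a b \<delta>) = 0"
    by simp
  with F(1) have "?A1 * ?A2 * (64 * a^8 * b^2) - 16 * \<rho>^8 * invariant_numerator a b \<delta> = 0"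
    by (metis mult_eq_0_iff of_real_eq_0_iff power_eq_0_iff)
  then show ?thesis by (simp add: mult_ac)
qed

theorem mainTheorem8:
  fixes a b \<rho> :: real and P1 P2 P3 :: "real \<times> real"
  assumes "a > b" and "b > 0" and "\<rho> > 0"
    and "three_periodic a b P1 P2 P3"
  defines "c \<equiv> sqrt (a^2 - b^2)"
    and "\<delta> \<equiv> sqrt (a^4 - a^2 * b^2 + b^4)"
  shows "tri_area (invert \<rho> (-c, 0) P1) (invert \<rho> (-c, 0) P2) (invert \<rho> (-c, 0) P3)
       * tri_area (invert \<rho> (c, 0) P1) (invert \<rho> (c, 0) P2) (invert \<rho> (c, 0) P3)
       = \<rho>^8 / (8 * a^8 * b^2) *
         ((a^4 + 2 * a^2 * b^2 + 4 * b^4) * \<delta> + a^6 + 3/2 * a^4 * b^2 + 4 * b^6)"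
proof -
  define A1 where "A1 = double_signed_area (invert \<rho> (-c, 0) P1) (invert \<rho> (-c, 0) P2) (invert \<rho> (-c, 0) P3)"
  define A2 where "A2 = double_signed_area (invert \<rho> (c, 0) P1) (invert \<rho> (c, 0) P2) (invert \<rho> (c, 0) P3)"
  have ab: "a > 0" "b > 0" using assms(1,2) by simp_all
  have prod: "A1 * A2 * (4 * a^8 * b^2) = \<rho>^8 * invariant_numerator a b \<delta>"
    using double_signed_area_product[OF assms(1,2,4), of \<rho>] by (simp add: A1_def A2_def c_def \<delta>_def)
  have "\<delta> > 0" using quartic_radicand_pos[of a b] ab by (simp add: \<delta>_def)
  then have "A1 * A2 * (4 * a^8 * b^2) > 0"
    unfolding prod using invariant_numerator_pos[OF ab] assms(3) by simp
  moreover have "4 * a^8 * b^2 > 0" using ab by simp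
  ultimately have "A1 * A2 > 0" by (rule zero_less_mult_pos2)
  then have "tri_area (invert \<rho> (-c, 0) P1) (invert \<rho> (-c, 0) P2) (invert \<rho> (-c, 0) P3)
       * tri_area (invert \<rho> (c, 0) P1) (invert \<rho> (c, 0) P2) (invert \<rho> (c, 0) P3) = A1 * A2 / 4"
    by (simp add: tri_area_eq A1_def A2_def abs_mult[symmetric])
  also have "\<dots> = \<rho>^8 * invariant_numerator a b \<delta> / (16 * a^8 * b^2)"
    using prod ab by (simp add: field_simps)
  finally show ?thesis using ab by (simp add: invariant_numerator_def field_simps)
qed

end
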